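(* Let $\mathcal{P}=\mathbb{Z}_{41}\times\mathbb{Z}_{11}$, let $a$ be a primitive element of $\mathbb{Z}_{41}$ and $b$ a primitive element of $\mathbb{Z}_{11}$, and fix $i\in\{1,2,3,4\}$. Define permutations of $\mathcal{P}$ by $\alpha:(e,f)\mapsto(e+1,f)$, $\beta:(e,f)\mapsto(e,f+1)$, $\iota:(e,f)\mapsto(-e,f)$ and $\gamma_i:(e,f)\mapsto(a^8e,b^{2i}f)$. Let $G$ be either $\langle\alpha,\beta,\iota,\gamma_i\rangle$ or $\langle\alpha,\beta,\gamma_i\rangle$. Let $H=\mathrm{AGL}(1,41)\times\mathrm{AGL}(1,11)$ be the group of all permutations of $\mathcal{P}$ of the form $(e,f)\mapsto(ue+s,wf+t)$ with $u\in\mathbb{Z}_{41}\setminus\{0\}$, $s\in\mathbb{Z}_{41}$, $w\in\mathbb{Z}_{11}\setminus\{0\}$, $t\in\mathbb{Z}_{11}$. Then the normaliser of $G$ in $\mathrm{Sym}(\mathcal{P})$ equals $H$. *)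

theory Defs
  imports "HOL-Algebra.Algebra" "HOL-Number_Theory.Number_Theory"
begin

definition Pts :: "(nat \<times> nat) set" where
  "Pts = {0..<41} \<times> {0..<11}"

text \<open>Permutations of Pts are elements of Bij Pts (extensional functions), i.e. carrier of BijGroup Pts.\<close>
definition alpha :: "nat \<times> nat \<Rightarrow> nat \<times> nat" where
  "alpha = restrict (\<lambda>(e, f). ((e + 1) mod 41, f)) Pts"

definition beta :: "nat \<times> nat \<Rightarrow> nat \<times> nat" where
  "beta = restrict (\<lambda>(e, f). (e, (f + 1) mod 11)) Pts"

definition iota :: "nat \<times> nat \<Rightarrow> nat \<times> nat" where
  "iota = restrict (\<lambda>(e, f). ((41 - e) mod 41, f)) Pts"

definition gamma :: "nat \<Rightarrow> nat \<Rightarrow> nat \<Rightarrow> nat \<times> nat \<Rightarrow> nat \<times> nat" where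
  "gamma a b i = restrict (\<lambda>(e, f). ((a ^ 8 * e) mod 41, (b ^ (2 * i) * f) mod 11)) Pts"

definition AGL_prod :: "(nat \<times> nat \<Rightarrow> nat \<times> nat) set" where
  "AGL_prod = {restrict (\<lambda>(e, f). ((u * e + s) mod 41, (w * f + t) mod 11)) Pts
               | u s w t. u \<in> {1..<41} \<and> s < 41 \<and> w \<in> {1..<11} \<and> t < 11}"

end

theory Submission
  imports Defs
begin

text \<open>
  The affine maps \<open>(e, f) \<mapsto> (u e + s, w f + t)\<close> of \<open>\<int>\<^sub>p \<times> \<int>\<^sub>q\<close> form
  \<open>H = AGL(1,p) \<times> AGL(1,q)\<close>, and its translations form a normal subgroup \<open>T = \<langle>\<alpha>, \<beta>\<rangle>\<close>
  with abelian quotient; hence \<open>H\<close> normalises every \<open>G\<close> with \<open>T \<le> G \<le> H\<close>.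
  Conversely, let \<open>\<sigma>\<close> normalise such a \<open>G\<close>. The element \<open>\<sigma> \<alpha> \<sigma>\<^sup>-\<^sup>1\<close> of \<open>H\<close> has order
  dividing \<open>p\<close>, so its multipliers have orders dividing \<open>gcd p (p - 1)\<close> and \<open>gcd p (q - 1)\<close>,
  and its second shift has order dividing \<open>gcd p q\<close>. If \<open>p \<noteq> q\<close> and p does not divide
  \<open>q - 1\<close>, this makes \<open>\<sigma> \<alpha> \<sigma>\<^sup>-\<^sup>1 = \<alpha>\<^sup>c\<close>; symmetrically \<open>\<sigma> \<beta> \<sigma>\<^sup>-\<^sup>1 = \<beta>\<^sup>d\<close>.
  Writing \<open>(e, f) = \<alpha>\<^sup>e \<beta>\<^sup>f (0, 0)\<close> gives \<open>\<sigma> (e, f) = (c e + s, d f + t)\<close> with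
  \<open>(s, t) = \<sigma> (0, 0)\<close>, and bijectivity makes \<open>c\<close> and \<open>d\<close> units.
  For \<open>p = 41\<close>, \<open>q = 11\<close> the argument only needs the generators to be affine.
\<close>

lemma cong_one_if_pow_cong_one:
  fixes m :: int and n p :: nat
  assumes "Factorial_Ring.prime p" "n > 0" "coprime n (p - 1)" "[m ^ n = 1] (mod int p)"
  shows "[m = 1] (mod int p)"
proof -
  define k where "k = nat (m mod int p)"
  have "p > 0" using assms(1) prime_gt_0_nat by blast
  then have mk: "[m = int k] (mod int p)" by (simp add: k_def cong_def)
  then have "[int k ^ n = 1] (mod int p)" using assms(4) cong_pow cong_sym cong_trans by metis
  then have kn: "[k ^ n = 1] (mod p)" by (metis cong_int_iff of_nat_1 of_nat_power)
  then have ord_n: "ord p k dvd n" using ord_divides by blast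
  then have "coprime p k" using assms(2) ord_eq_0 by fastforce
  then have "ord p k dvd p - 1" using order_divides_totient totient_prime assms(1) by metis
  with ord_n assms(3) have "ord p k = 1" using coprime_common_divisor_nat by blast
  then have "[k = 1] (mod p)" using ord_eq_Suc_0_iff by simp
  with mk show ?thesis by (metis cong_int_iff cong_trans of_nat_1)
qed

lemma (in group) pow_intertwine:
  assumes "g \<in> carrier G" "x \<in> carrier G" "y \<in> carrier G" "g \<otimes> x = y \<otimes> g"
  shows "g \<otimes> x [^] (n::nat) = y [^] n \<otimes> g"
proof (induction n)
  case (Suc n)
  have "g \<otimes> x [^] Suc n = (g \<otimes> x [^] n) \<otimes> x" using assms by (simp add: m_assoc)
  also have "\<dots> = y [^] n \<otimes> (g \<otimes> x)" using Suc assms by (simp add: m_assoc)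
  also have "\<dots> = y [^] Suc n \<otimes> g" using assms by (simp add: m_assoc)
  finally show ?case .
qed (use assms in simp)

lemma (in group) intertwined_pow_eq_one:
  assumes "g \<in> carrier G" "x \<in> carrier G" "y \<in> carrier G" "g \<otimes> x = y \<otimes> g" "x [^] (n::nat) = \<one>"
  shows "y [^] n = \<one>"
  using pow_intertwine[OF assms(1-4), of n] assms by simp

lemma (in group) mem_normalizer_iff:
  assumes "K \<subseteq> carrier G"
  shows "g \<in> normalizer G K \<longleftrightarrow> g \<in> carrier G \<and> (\<lambda>k. g \<otimes> k \<otimes> inv g) ` K = K"
proof -
  have "g <# K #> inv g = (\<lambda>k. g \<otimes> k \<otimes> inv g) ` K"
    by (auto simp: l_coset_def r_coset_def)
  then show ?thesis
    using assms by (simp add: normalizer_def stabilizer_def)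
qed

lemma (in group) normalizer_intertwine:
  assumes "K \<subseteq> carrier G" "g \<in> normalizer G K" "x \<in> K"
  obtains y where "y \<in> K" "g \<otimes> x = y \<otimes> g"
proof
  have g: "g \<in> carrier G" and conj: "(\<lambda>k. g \<otimes> k \<otimes> inv g) ` K = K"
    using assms(1,2) mem_normalizer_iff by blast+
  show "g \<otimes> x \<otimes> inv g \<in> K"
    using conj assms(3) by blast
  show "g \<otimes> x = g \<otimes> x \<otimes> inv g \<otimes> g"
    using g assms(1,3) by (auto simp: m_assoc)
qed

lemma (in group) subset_normalizer_if_derived_set_subset:
  assumes "subgroup H G" "subgroup K G" "K \<subseteq> H" "derived_set G H \<subseteq> K"
  shows "H \<subseteq> normalizer G K"
proof
  have H: "H \<subseteq> carrier G" and K: "K \<subseteq> carrier G"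
    using assms(1,2) subgroup.subset by blast+
  have conj_in: "h \<otimes> k \<otimes> inv h \<in> K" if "h \<in> H" "k \<in> K" for h k
  proof -
    have "h \<otimes> k \<otimes> inv h \<otimes> inv k \<in> K"
      using assms(3,4) that by blast
    then have "h \<otimes> k \<otimes> inv h \<otimes> inv k \<otimes> k \<in> K"
      using subgroup.m_closed[OF assms(2)] that(2) by blast
    moreover have "h \<in> carrier G" "k \<in> carrier G"
      using H K that by auto
    ultimately show ?thesis
      by (simp add: m_assoc)
  qed
  fix h assume h: "h \<in> H"
  then have "h \<in> carrier G" "inv h \<in> H"
    using H subgroup.m_inv_closed[OF assms(1)] by auto
  then have "k = h \<otimes> (inv h \<otimes> k \<otimes> h) \<otimes> inv h" "inv h \<otimes> k \<otimes> h \<in> K"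
    if "k \<in> K" for k
    using K that conj_in[of "inv h" k] by (auto simp: conjugation_is_surj)
  then have "(\<lambda>k. h \<otimes> k \<otimes> inv h) ` K = K"
    using h conj_in by blast
  then show "h \<in> normalizer G K"
    using H K h mem_normalizer_iff by blast
qed

lemma BijGroup_mult_apply:
  "f \<in> carrier (BijGroup S) \<Longrightarrow> g \<in> carrier (BijGroup S) \<Longrightarrow> x \<in> S \<Longrightarrow> (f \<otimes>\<^bsub>BijGroup S\<^esub> g) x = f (g x)"
  by (simp add: BijGroup_def compose_eq)

locale prime_grid =
  fixes p q :: nat
  assumes prime_p: "Factorial_Ring.prime p" and prime_q: "Factorial_Ring.prime q"
begin

lemma p_gt_1: "p > 1" and q_gt_1: "q > 1"
  using prime_p prime_q prime_gt_1_nat by blast+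

definition grid :: "(nat \<times> nat) set" where
  "grid = {0..<p} \<times> {0..<q}"

abbreviation Sym :: "(nat \<times> nat \<Rightarrow> nat \<times> nat) monoid" where
  "Sym \<equiv> BijGroup grid"

text \<open>Integer coefficients avoid truncated subtraction when forming inverses and differences.\<close>

definition aff :: "int \<Rightarrow> int \<Rightarrow> int \<Rightarrow> int \<Rightarrow> nat \<times> nat \<Rightarrow> nat \<times> nat" where
  "aff u s w t = (\<lambda>(e, f) \<in> grid. (nat ((u * int e + s) mod int p), nat ((w * int f + t) mod int q)))"

definition AGL :: "(nat \<times> nat \<Rightarrow> nat \<times> nat) set" where
  "AGL = {aff u s w t | u s w t. coprime u (int p) \<and> coprime w (int q)}"

definition shifts :: "(nat \<times> nat \<Rightarrow> nat \<times> nat) set" where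
  "shifts = {aff 1 s 1 t | s t. True}"

lemma aff_apply:
  "e < p \<Longrightarrow> f < q \<Longrightarrow>
    aff u s w t (e, f) = (nat ((u * int e + s) mod int p), nat ((w * int f + t) mod int q))"
  by (simp add: aff_def grid_def)

lemma aff_in_grid: "x \<in> grid \<Longrightarrow> aff u s w t x \<in> grid"
  using p_gt_1 q_gt_1 by (auto simp: aff_def grid_def nat_less_iff)

lemma aff_cong:
  assumes "[u = u'] (mod int p)" "[s = s'] (mod int p)" "[w = w'] (mod int q)" "[t = t'] (mod int q)"
  shows "aff u s w t = aff u' s' w' t'"
proof -
  have "[u * int e + s = u' * int e + s'] (mod int p)" for e
    using assms by (intro cong_add cong_mult cong_refl)
  moreover have "[w * int f + t = w' * int f + t'] (mod int q)" for f
    using assms by (intro cong_add cong_mult cong_refl)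
  ultimately show ?thesis
    unfolding aff_def cong_def by (intro restrict_ext) (auto split: prod.splits)
qed

lemma aff_eq_aff_iff:
  "aff u s w t = aff u' s' w' t' \<longleftrightarrow>
    [u = u'] (mod int p) \<and> [s = s'] (mod int p) \<and> [w = w'] (mod int q) \<and> [t = t'] (mod int q)"
proof
  assume eq: "aff u s w t = aff u' s' w' t'"
  have "aff u s w t (0, 0) = aff u' s' w' t' (0, 0)" "aff u s w t (1, 1) = aff u' s' w' t' (1, 1)"
    using eq by simp_all
  then have "[s = s'] (mod int p)" "[t = t'] (mod int q)"
    and "[u + s = u' + s'] (mod int p)" "[w + t = w' + t'] (mod int q)"
    using p_gt_1 q_gt_1 by (simp_all add: aff_apply cong_def eq_nat_nat_iff)
  then show "[u = u'] (mod int p) \<and> [s = s'] (mod int p) \<and> [w = w'] (mod int q) \<and> [t = t'] (mod int q)"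
    using dvd_diff[of "int p" "u + s - (u' + s')" "s - s'"] dvd_diff[of "int q" "w + t - (w' + t')" "t - t'"]
    by (simp add: cong_iff_dvd_diff)
qed (use aff_cong in blast)

lemma compose_aff:
  "compose grid (aff u s w t) (aff u' s' w' t') = aff (u * u') (u * s' + s) (w * w') (w * t' + t)"
proof
  fix x
  show "compose grid (aff u s w t) (aff u' s' w' t') x = aff (u * u') (u * s' + s) (w * w') (w * t' + t) x"
  proof (cases "x \<in> grid")
    case True
    then obtain e f where x: "x = (e, f)" "e < p" "f < q" by (auto simp: grid_def)
    have mod_pos: "0 \<le> y mod int p" "0 \<le> z mod int q" for y z
      using p_gt_1 q_gt_1 by simp_all
    have mod_mult_mod: "(a * (y mod n) + r) mod n = (a * y + r) mod n" for a y r n :: int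
      by (metis mod_add_left_eq mod_mult_right_eq)
    have "compose grid (aff u s w t) (aff u' s' w' t') x = aff u s w t (aff u' s' w' t' x)"
      using True by (simp add: compose_eq)
    also have "\<dots> = (nat ((u * ((u' * int e + s') mod int p) + s) mod int p),
                     nat ((w * ((w' * int f + t') mod int q) + t) mod int q))"
      using x p_gt_1 q_gt_1 mod_pos by (simp add: aff_apply nat_less_iff)
    also have "\<dots> = aff (u * u') (u * s' + s) (w * w') (w * t' + t) x"
      using x by (simp add: aff_apply mod_mult_mod distrib_left mult.assoc add.assoc)
    finally show ?thesis .
  qed (simp add: compose_def aff_def)
qed

lemma aff_one: "aff 1 0 1 0 = (\<lambda>x \<in> grid. x)"
  unfolding aff_def by (intro restrict_ext) (auto simp: grid_def)

lemma aff_left_inverse: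
  assumes "[u' * u = 1] (mod int p)" "[w' * w = 1] (mod int q)"
  shows "compose grid (aff u' (- (u' * s)) w' (- (w' * t))) (aff u s w t) = (\<lambda>x \<in> grid. x)"
  unfolding compose_aff aff_one[symmetric] using assms by (intro aff_cong) simp_all

lemma aff_in_Bij:
  assumes "coprime u (int p)" "coprime w (int q)"
  shows "aff u s w t \<in> Bij grid"
proof -
  obtain u' w' where "[u * u' = 1] (mod int p)" "[w * w' = 1] (mod int q)"
    using cong_solve_coprime_int assms by blast
  then have left_inv: "compose grid (aff u' (- (u' * s)) w' (- (w' * t))) (aff u s w t) = (\<lambda>x \<in> grid. x)"
    by (intro aff_left_inverse) (simp_all add: mult.commute)
  have "aff u' (- (u' * s)) w' (- (w' * t)) (aff u s w t x) = x" if "x \<in> grid" for x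
  proof -
    have "aff u' (- (u' * s)) w' (- (w' * t)) (aff u s w t x)
        = compose grid (aff u' (- (u' * s)) w' (- (w' * t))) (aff u s w t) x"
      using that by (simp add: compose_eq)
    then show ?thesis
      using left_inv that by simp
  qed
  then have inj: "inj_on (aff u s w t) grid"
    by (rule inj_on_inverseI)
  have "finite grid" by (simp add: grid_def)
  then have "aff u s w t ` grid = grid"
    by (rule endo_inj_surj) (use inj aff_in_grid in auto)
  moreover have "aff u s w t \<in> extensional grid"
    by (simp add: aff_def)
  ultimately show ?thesis
    using inj by (simp add: Bij_def bij_betw_def)
qed

lemma aff_in_Bij_iff: "aff u s w t \<in> Bij grid \<longleftrightarrow> coprime u (int p) \<and> coprime w (int q)"
proof
  assume "aff u s w t \<in> Bij grid"
  then have inj: "inj_on (aff u s w t) grid" by (simp add: Bij_def bij_betw_def)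
  have in_grid: "(1, 0) \<in> grid" "(0, 1) \<in> grid" "(0, 0) \<in> grid"
    using p_gt_1 q_gt_1 by (simp_all add: grid_def)
  have "\<not> int p dvd u"
  proof
    assume "int p dvd u"
    then have "aff u s w t (1, 0) = aff u s w t (0, 0)"
      using p_gt_1 q_gt_1 by (auto simp: aff_apply)
    then show False using inj in_grid by (auto dest: inj_onD)
  qed
  moreover have "\<not> int q dvd w"
  proof
    assume "int q dvd w"
    then have "aff u s w t (0, 1) = aff u s w t (0, 0)"
      using p_gt_1 q_gt_1 by (auto simp: aff_apply)
    then show False using inj in_grid by (auto dest: inj_onD)
  qed
  ultimately have "coprime (int p) u" "coprime (int q) w"
    using prime_p prime_q by (simp_all add: prime_imp_coprime)
  then show "coprime u (int p) \<and> coprime w (int q)"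
    by (simp add: coprime_commute)
qed (simp add: aff_in_Bij)

lemma one_Sym: "\<one>\<^bsub>Sym\<^esub> = aff 1 0 1 0"
  by (simp add: BijGroup_def aff_one)

lemma mult_aff:
  assumes "coprime u (int p)" "coprime w (int q)" "coprime u' (int p)" "coprime w' (int q)"
  shows "aff u s w t \<otimes>\<^bsub>Sym\<^esub> aff u' s' w' t' = aff (u * u') (u * s' + s) (w * w') (w * t' + t)"
  using assms by (simp add: BijGroup_def aff_in_Bij compose_aff)

lemma inv_aff:
  assumes "[u' * u = 1] (mod int p)" "[w' * w = 1] (mod int q)"
  shows "inv\<^bsub>Sym\<^esub> (aff u s w t) = aff u' (- (u' * s)) w' (- (w' * t))"
proof -
  have "coprime (u' * u) (int p)" "coprime (w' * w) (int q)"
    using cong_imp_coprime[OF cong_sym[OF assms(1)]] cong_imp_coprime[OF cong_sym[OF assms(2)]]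
    by simp_all
  then have "aff u s w t \<in> carrier Sym" "aff u' (- (u' * s)) w' (- (w' * t)) \<in> carrier Sym"
    by (simp_all add: BijGroup_def aff_in_Bij)
  moreover have "aff u' (- (u' * s)) w' (- (w' * t)) \<otimes>\<^bsub>Sym\<^esub> aff u s w t = \<one>\<^bsub>Sym\<^esub>"
    using calculation by (simp add: BijGroup_def aff_left_inverse assms)
  ultimately show ?thesis
    by (intro group.inv_equality[OF group_BijGroup])
qed

lemma pow_aff:
  assumes "coprime u (int p)" "coprime w (int q)"
  shows "aff u s w t [^]\<^bsub>Sym\<^esub> n = aff (u ^ n) (s * (\<Sum>i<n. u ^ i)) (w ^ n) (t * (\<Sum>i<n. w ^ i))"
proof (induction n)
  case 0
  show ?case by (simp add: one_Sym)
next
  case (Suc n)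
  have "aff u s w t [^]\<^bsub>Sym\<^esub> Suc n
      = aff (u ^ n * u) (u ^ n * s + s * (\<Sum>i<n. u ^ i)) (w ^ n * w) (w ^ n * t + t * (\<Sum>i<n. w ^ i))"
    using Suc assms by (simp add: mult_aff)
  also have "\<dots> = aff (u ^ Suc n) (s * (\<Sum>i<Suc n. u ^ i)) (w ^ Suc n) (t * (\<Sum>i<Suc n. w ^ i))"
    by (simp add: algebra_simps)
  finally show ?case .
qed

lemma pow_shift: "aff 1 s 1 t [^]\<^bsub>Sym\<^esub> n = aff 1 (int n * s) 1 (int n * t)"
  by (simp add: pow_aff mult.commute)

lemma aff_in_AGL: "coprime u (int p) \<Longrightarrow> coprime w (int q) \<Longrightarrow> aff u s w t \<in> AGL"
  by (auto simp: AGL_def)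

lemma AGLE:
  assumes "g \<in> AGL"
  obtains u s w t where "g = aff u s w t" "coprime u (int p)" "coprime w (int q)"
  using assms by (auto simp: AGL_def)

lemma inv_affE:
  assumes "coprime u (int p)" "coprime w (int q)"
  obtains u' w' where "inv\<^bsub>Sym\<^esub> (aff u s w t) = aff u' (- (u' * s)) w' (- (w' * t))"
    "[u * u' = 1] (mod int p)" "[w * w' = 1] (mod int q)" "coprime u' (int p)" "coprime w' (int q)"
proof -
  obtain u' w' where inverses: "[u * u' = 1] (mod int p)" "[w * w' = 1] (mod int q)"
    using cong_solve_coprime_int assms by blast
  then have "coprime (u * u') (int p)" "coprime (w * w') (int q)"
    using cong_imp_coprime[OF cong_sym[OF inverses(1)]] cong_imp_coprime[OF cong_sym[OF inverses(2)]]
    by simp_all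
  moreover have "inv\<^bsub>Sym\<^esub> (aff u s w t) = aff u' (- (u' * s)) w' (- (w' * t))"
    using inverses by (intro inv_aff) (simp_all add: mult.commute)
  ultimately show ?thesis
    using inverses that by simp
qed

lemma aff_of_nat:
  "aff (int u) (int s) (int w) (int t) = (\<lambda>(e, f) \<in> grid. ((u * e + s) mod p, (w * f + t) mod q))"
  unfolding aff_def by (intro restrict_ext) (auto simp flip: of_nat_mult of_nat_add of_nat_mod)

lemma AGL_eq_residues:
  "AGL = {(\<lambda>(e, f) \<in> grid. ((u * e + s) mod p, (w * f + t) mod q))
          | u s w t. u \<in> {1..<p} \<and> s < p \<and> w \<in> {1..<q} \<and> t < q}"
proof (intro equalityI subsetI)
  fix g assume "g \<in> AGL"
  then obtain u s w t where g: "g = aff u s w t" "coprime u (int p)" "coprime w (int q)"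
    by (rule AGLE)
  have "\<not> int p dvd u" "\<not> int q dvd w"
    using g(2,3) p_gt_1 q_gt_1 by (auto simp: coprime_commute dest: coprime_absorb_left)
  then have "nat (u mod int p) \<in> {1..<p}" "nat (w mod int q) \<in> {1..<q}"
    using p_gt_1 q_gt_1 by (auto simp: nat_less_iff dvd_eq_mod_eq_0)
  moreover have "nat (s mod int p) < p" "nat (t mod int q) < q"
    using p_gt_1 q_gt_1 by (simp_all add: nat_less_iff)
  moreover have "g = aff (int (nat (u mod int p))) (int (nat (s mod int p)))
                         (int (nat (w mod int q))) (int (nat (t mod int q)))"
    unfolding g(1) using p_gt_1 q_gt_1 by (intro aff_cong) simp_all
  ultimately show "g \<in> {(\<lambda>(e, f) \<in> grid. ((u * e + s) mod p, (w * f + t) mod q))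
          | u s w t. u \<in> {1..<p} \<and> s < p \<and> w \<in> {1..<q} \<and> t < q}"
    unfolding aff_of_nat by blast
next
  fix g assume "g \<in> {(\<lambda>(e, f) \<in> grid. ((u * e + s) mod p, (w * f + t) mod q))
          | u s w t. u \<in> {1..<p} \<and> s < p \<and> w \<in> {1..<q} \<and> t < q}"
  then obtain u s w t where g: "g = aff (int u) (int s) (int w) (int t)"
    and "u \<in> {1..<p}" "w \<in> {1..<q}"
    unfolding aff_of_nat by blast
  then have "\<not> p dvd u" "\<not> q dvd w"
    by (auto dest: dvd_imp_le)
  then have "coprime (int u) (int p)" "coprime (int w) (int q)"
    using prime_p prime_q by (simp_all add: prime_imp_coprime coprime_commute)
  then show "g \<in> AGL"
    unfolding g by (rule aff_in_AGL)
qed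

lemma AGL_subgroup: "subgroup AGL Sym"
proof
  show "AGL \<subseteq> carrier Sym"
    by (auto simp: BijGroup_def aff_in_Bij elim: AGLE)
  show "\<one>\<^bsub>Sym\<^esub> \<in> AGL"
    by (simp add: one_Sym aff_in_AGL)
  show "g \<otimes>\<^bsub>Sym\<^esub> h \<in> AGL" if "g \<in> AGL" "h \<in> AGL" for g h
    using that by (auto simp: mult_aff aff_in_AGL elim!: AGLE)
  show "inv\<^bsub>Sym\<^esub> g \<in> AGL" if "g \<in> AGL" for g
  proof -
    obtain u s w t where "g = aff u s w t" "coprime u (int p)" "coprime w (int q)"
      using \<open>g \<in> AGL\<close> by (rule AGLE)
    then show ?thesis
      by (metis inv_affE aff_in_AGL)
  qed
qed

lemma shifts_subset_subgroup:
  assumes "subgroup G Sym" "aff 1 1 1 0 \<in> G" "aff 1 0 1 1 \<in> G"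
  shows "shifts \<subseteq> G"
proof
  fix g assume "g \<in> shifts"
  then obtain s t where g: "g = aff 1 s 1 t" by (auto simp: shifts_def)
  have "aff 1 1 1 0 [^]\<^bsub>Sym\<^esub> nat (s mod int p) \<otimes>\<^bsub>Sym\<^esub> aff 1 0 1 1 [^]\<^bsub>Sym\<^esub> nat (t mod int q) \<in> G"
    using assms group.subgroup_int_pow_closed[OF group_BijGroup assms(1)]
    by (metis int_pow_int subgroup.m_closed)
  moreover have "aff 1 1 1 0 [^]\<^bsub>Sym\<^esub> nat (s mod int p) \<otimes>\<^bsub>Sym\<^esub> aff 1 0 1 1 [^]\<^bsub>Sym\<^esub> nat (t mod int q)
      = aff 1 (s mod int p) 1 (t mod int q)"
    using p_gt_1 q_gt_1 by (simp add: pow_shift mult_aff)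
  moreover have "aff 1 (s mod int p) 1 (t mod int q) = g"
    unfolding g by (intro aff_cong) simp_all
  ultimately show "g \<in> G" by simp
qed

lemma aff_in_shifts_iff: "aff u s w t \<in> shifts \<longleftrightarrow> [u = 1] (mod int p) \<and> [w = 1] (mod int q)"
proof
  assume "aff u s w t \<in> shifts"
  then obtain s' t' where "aff u s w t = aff 1 s' 1 t'"
    by (auto simp: shifts_def)
  then show "[u = 1] (mod int p) \<and> [w = 1] (mod int q)"
    by (simp add: aff_eq_aff_iff)
next
  assume "[u = 1] (mod int p) \<and> [w = 1] (mod int q)"
  then have "aff u s w t = aff 1 s 1 t"
    by (intro aff_cong) auto
  then show "aff u s w t \<in> shifts"
    by (auto simp: shifts_def)
qed

lemma derived_set_AGL: "derived_set Sym AGL \<subseteq> shifts"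
proof
  fix c assume "c \<in> derived_set Sym AGL"
  then obtain g h where gh: "g \<in> AGL" "h \<in> AGL"
    and c: "c = g \<otimes>\<^bsub>Sym\<^esub> h \<otimes>\<^bsub>Sym\<^esub> inv\<^bsub>Sym\<^esub> g \<otimes>\<^bsub>Sym\<^esub> inv\<^bsub>Sym\<^esub> h"
    by blast
  obtain u s w t where g: "g = aff u s w t" "coprime u (int p)" "coprime w (int q)"
    using gh(1) by (rule AGLE)
  obtain m x n y where h: "h = aff m x n y" "coprime m (int p)" "coprime n (int q)"
    using gh(2) by (rule AGLE)
  obtain u' w' where g': "inv\<^bsub>Sym\<^esub> (aff u s w t) = aff u' (- (u' * s)) w' (- (w' * t))"
    "[u * u' = 1] (mod int p)" "[w * w' = 1] (mod int q)" "coprime u' (int p)" "coprime w' (int q)"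
    using g(2,3) by (rule inv_affE)
  obtain m' n' where h': "inv\<^bsub>Sym\<^esub> (aff m x n y) = aff m' (- (m' * x)) n' (- (n' * y))"
    "[m * m' = 1] (mod int p)" "[n * n' = 1] (mod int q)" "coprime m' (int p)" "coprime n' (int q)"
    using h(2,3) by (rule inv_affE)
  have "[u * m * u' * m' = 1] (mod int p)" "[w * n * w' * n' = 1] (mod int q)"
    using cong_mult[OF g'(2) h'(2)] cong_mult[OF g'(3) h'(3)] by (simp_all add: ac_simps)
  then show "c \<in> shifts"
    unfolding c g(1) h(1) g'(1) h'(1) using g h g' h' by (simp add: mult_aff aff_in_shifts_iff)
qed

lemma AGL_subset_normalizer:
  assumes "subgroup G Sym" "shifts \<subseteq> G" "G \<subseteq> AGL"
  shows "AGL \<subseteq> normalizer Sym G"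
  using group.subset_normalizer_if_derived_set_subset[OF group_BijGroup AGL_subgroup assms(1,3)]
    derived_set_AGL assms(2) by blast

lemma AGL_pow_eq_one:
  assumes "k \<in> AGL" "k [^]\<^bsub>Sym\<^esub> n = \<one>\<^bsub>Sym\<^esub>" "n > 0" "coprime n (p - 1)" "coprime n (q - 1)"
  obtains s t where "k = aff 1 s 1 t" "[int n * s = 0] (mod int p)" "[int n * t = 0] (mod int q)"
proof -
  obtain u s w t where k: "k = aff u s w t" "coprime u (int p)" "coprime w (int q)"
    using assms(1) by (rule AGLE)
  then have "[u ^ n = 1] (mod int p)" "[w ^ n = 1] (mod int q)"
    using assms(2) by (simp_all add: pow_aff one_Sym aff_eq_aff_iff)
  then have "[u = 1] (mod int p)" "[w = 1] (mod int q)"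
    using assms(3-5) prime_p prime_q by (simp_all add: cong_one_if_pow_cong_one)
  then have "k = aff 1 s 1 t"
    unfolding k(1) by (intro aff_cong) simp_all
  moreover from this have "[int n * s = 0] (mod int p)" "[int n * t = 0] (mod int q)"
    using assms(2) by (simp_all add: pow_shift one_Sym aff_eq_aff_iff)
  ultimately show ?thesis
    using that by blast
qed

lemma AGL_pow_p_eq_one:
  assumes "p \<noteq> q" "\<not> p dvd q - 1" "k \<in> AGL" "k [^]\<^bsub>Sym\<^esub> p = \<one>\<^bsub>Sym\<^esub>"
  obtains s where "k = aff 1 s 1 0"
proof -
  have "p > 0" "coprime p (p - 1)"
    using p_gt_1 coprime_diff_one_right_nat[of p] by auto
  moreover have "coprime p (q - 1)" and pq: "coprime (int p) (int q)"
    using assms(1,2) prime_p prime_q by (simp_all add: prime_imp_coprime primes_coprime)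
  ultimately obtain s t where k: "k = aff 1 s 1 t" and "[int p * t = 0] (mod int q)"
    using AGL_pow_eq_one[OF assms(3,4)] by blast
  then have "[t = 0] (mod int q)"
    using cong_mult_lcancel[OF pq, of t 0] by simp
  then have "k = aff 1 s 1 0"
    unfolding k by (simp add: aff_eq_aff_iff)
  then show ?thesis
    using that by blast
qed

lemma AGL_pow_q_eq_one:
  assumes "p \<noteq> q" "\<not> q dvd p - 1" "k \<in> AGL" "k [^]\<^bsub>Sym\<^esub> q = \<one>\<^bsub>Sym\<^esub>"
  obtains t where "k = aff 1 0 1 t"
proof -
  have "q > 0" "coprime q (q - 1)"
    using q_gt_1 coprime_diff_one_right_nat[of q] by auto
  moreover have "coprime q (p - 1)" and qp: "coprime (int q) (int p)"
    using assms(1,2) prime_p prime_q by (simp_all add: prime_imp_coprime primes_coprime)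
  ultimately obtain s t where k: "k = aff 1 s 1 t" and "[int q * s = 0] (mod int p)"
    using AGL_pow_eq_one[OF assms(3,4)] by blast
  then have "[s = 0] (mod int p)"
    using cong_mult_lcancel[OF qp, of s 0] by simp
  then have "k = aff 1 0 1 t"
    unfolding k by (simp add: aff_eq_aff_iff)
  then show ?thesis
    using that by blast
qed

lemma affine_if_intertwines_shifts:
  assumes "\<sigma> \<in> carrier Sym"
    and "\<sigma> \<otimes>\<^bsub>Sym\<^esub> aff 1 1 1 0 = aff 1 c 1 0 \<otimes>\<^bsub>Sym\<^esub> \<sigma>"
    and "\<sigma> \<otimes>\<^bsub>Sym\<^esub> aff 1 0 1 1 = aff 1 0 1 d \<otimes>\<^bsub>Sym\<^esub> \<sigma>"
    and "\<sigma> (0, 0) = (s, t)"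
  shows "\<sigma> = aff c (int s) d (int t)"
proof
  interpret Sym: group Sym by (rule group_BijGroup)
  have shift: "aff 1 a 1 b \<in> carrier Sym" for a b
    by (simp add: BijGroup_def aff_in_Bij)
  have "\<sigma> \<in> grid \<rightarrow> grid"
    using assms(1) by (simp add: BijGroup_def Bij_imp_funcset)
  moreover have "(0, 0) \<in> grid"
    using p_gt_1 q_gt_1 by (simp add: grid_def)
  ultimately have "(s, t) \<in> grid"
    using assms(4) by (metis funcset_mem)
  then have st: "s < p" "t < q" by (auto simp: grid_def)
  fix x
  show "\<sigma> x = aff c (int s) d (int t) x"
  proof (cases "x \<in> grid")
    case True
    then obtain e f where x: "x = (e, f)" "e < p" "f < q" by (auto simp: grid_def)
    let ?X = "aff 1 1 1 0 [^]\<^bsub>Sym\<^esub> e" and ?Y = "aff 1 0 1 1 [^]\<^bsub>Sym\<^esub> f"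
    let ?X' = "aff 1 c 1 0 [^]\<^bsub>Sym\<^esub> e" and ?Y' = "aff 1 0 1 d [^]\<^bsub>Sym\<^esub> f"
    have X: "\<sigma> \<otimes>\<^bsub>Sym\<^esub> ?X = ?X' \<otimes>\<^bsub>Sym\<^esub> \<sigma>" and Y: "\<sigma> \<otimes>\<^bsub>Sym\<^esub> ?Y = ?Y' \<otimes>\<^bsub>Sym\<^esub> \<sigma>"
      using Sym.pow_intertwine[OF assms(1) shift shift] assms(2,3) by blast+
    have "\<sigma> \<otimes>\<^bsub>Sym\<^esub> (?X \<otimes>\<^bsub>Sym\<^esub> ?Y) = (\<sigma> \<otimes>\<^bsub>Sym\<^esub> ?X) \<otimes>\<^bsub>Sym\<^esub> ?Y"
      using assms(1) shift by (simp add: Sym.m_assoc)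
    also have "\<dots> = ?X' \<otimes>\<^bsub>Sym\<^esub> (\<sigma> \<otimes>\<^bsub>Sym\<^esub> ?Y)"
      unfolding X using assms(1) shift by (simp add: Sym.m_assoc)
    also have "\<dots> = (?X' \<otimes>\<^bsub>Sym\<^esub> ?Y') \<otimes>\<^bsub>Sym\<^esub> \<sigma>"
      unfolding Y using assms(1) shift by (simp add: Sym.m_assoc)
    finally have intertwine:
      "\<sigma> \<otimes>\<^bsub>Sym\<^esub> aff 1 (int e) 1 (int f) = aff 1 (int e * c) 1 (int f * d) \<otimes>\<^bsub>Sym\<^esub> \<sigma>"
      by (simp add: pow_shift mult_aff)
    have "(0, 0) \<in> grid"
      using p_gt_1 q_gt_1 by (simp add: grid_def)
    have "\<sigma> x = (\<sigma> \<otimes>\<^bsub>Sym\<^esub> aff 1 (int e) 1 (int f)) (0, 0)"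
      using BijGroup_mult_apply[OF assms(1) shift \<open>(0, 0) \<in> grid\<close>] x by (simp add: aff_apply)
    also have "\<dots> = aff 1 (int e * c) 1 (int f * d) (s, t)"
      unfolding intertwine using BijGroup_mult_apply[OF shift assms(1) \<open>(0, 0) \<in> grid\<close>] assms(4)
      by simp
    also have "\<dots> = aff c (int s) d (int t) x"
      using x st by (simp add: aff_apply ac_simps)
    finally show ?thesis .
  next
    case False
    have "\<sigma> \<in> Bij grid"
      using assms(1) by (simp add: BijGroup_def)
    then have "\<sigma> x = undefined"
      using False by (intro extensional_arb Bij_imp_extensional)
    with False show ?thesis
      by (simp add: aff_def)
  qed
qed

lemma normalizer_subset_AGL:
  assumes "p \<noteq> q" "\<not> p dvd q - 1" "\<not> q dvd p - 1"
    and "subgroup G Sym" "G \<subseteq> AGL" "aff 1 1 1 0 \<in> G" "aff 1 0 1 1 \<in> G"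
  shows "normalizer Sym G \<subseteq> AGL"
proof
  interpret Sym: group Sym by (rule group_BijGroup)
  fix \<sigma> assume \<sigma>: "\<sigma> \<in> normalizer Sym G"
  have G: "G \<subseteq> carrier Sym"
    using assms(4) subgroup.subset by blast
  then have \<sigma>_carrier: "\<sigma> \<in> carrier Sym"
    using \<sigma> Sym.mem_normalizer_iff by blast
  obtain A where A: "A \<in> G" "\<sigma> \<otimes>\<^bsub>Sym\<^esub> aff 1 1 1 0 = A \<otimes>\<^bsub>Sym\<^esub> \<sigma>"
    using Sym.normalizer_intertwine[OF G \<sigma> assms(6)] by blast
  obtain B where B: "B \<in> G" "\<sigma> \<otimes>\<^bsub>Sym\<^esub> aff 1 0 1 1 = B \<otimes>\<^bsub>Sym\<^esub> \<sigma>"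
    using Sym.normalizer_intertwine[OF G \<sigma> assms(7)] by blast
  have "aff 1 1 1 0 [^]\<^bsub>Sym\<^esub> p = \<one>\<^bsub>Sym\<^esub>" "aff 1 0 1 1 [^]\<^bsub>Sym\<^esub> q = \<one>\<^bsub>Sym\<^esub>"
    by (simp_all add: pow_shift one_Sym aff_eq_aff_iff cong_def)
  then have "A [^]\<^bsub>Sym\<^esub> p = \<one>\<^bsub>Sym\<^esub>" "B [^]\<^bsub>Sym\<^esub> q = \<one>\<^bsub>Sym\<^esub>"
    using Sym.intertwined_pow_eq_one[OF \<sigma>_carrier _ _ A(2)] Sym.intertwined_pow_eq_one[OF \<sigma>_carrier _ _ B(2)]
      A(1) B(1) assms(6,7) G by blast+
  then obtain c d where "A = aff 1 c 1 0" "B = aff 1 0 1 d"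
    using AGL_pow_p_eq_one[OF assms(1,2)] AGL_pow_q_eq_one[OF assms(1,3)] A(1) B(1) assms(5)
    by (metis subsetD)
  moreover obtain s t where "\<sigma> (0, 0) = (s, t)"
    by fastforce
  ultimately have "\<sigma> = aff c (int s) d (int t)"
    using affine_if_intertwines_shifts \<sigma>_carrier A(2) B(2) by blast
  then show "\<sigma> \<in> AGL"
    using \<sigma>_carrier aff_in_Bij_iff aff_in_AGL by (simp add: BijGroup_def)
qed

theorem normalizer_eq_AGL:
  assumes "p \<noteq> q" "\<not> p dvd q - 1" "\<not> q dvd p - 1"
    and "subgroup G Sym" "G \<subseteq> AGL" "aff 1 1 1 0 \<in> G" "aff 1 0 1 1 \<in> G"
  shows "normalizer Sym G = AGL"
  using normalizer_subset_AGL[OF assms] AGL_subset_normalizer[OF assms(4) _ assms(5)]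
    shifts_subset_subgroup[OF assms(4,6,7)] by blast

corollary normalizer_generate_eq_AGL:
  assumes "p \<noteq> q" "\<not> p dvd q - 1" "\<not> q dvd p - 1"
    and "S \<subseteq> AGL" "aff 1 1 1 0 \<in> S" "aff 1 0 1 1 \<in> S"
  shows "normalizer Sym (generate Sym S) = AGL"
proof (rule normalizer_eq_AGL[OF assms(1-3)])
  interpret Sym: group Sym by (rule group_BijGroup)
  show "subgroup (generate Sym S) Sym"
    using assms(4) AGL_subgroup subgroup.subset Sym.generate_is_subgroup by blast
  show "generate Sym S \<subseteq> AGL"
    using Sym.generate_subgroup_incl[OF assms(4) AGL_subgroup] .
  show "aff 1 1 1 0 \<in> generate Sym S" "aff 1 0 1 1 \<in> generate Sym S"
    using assms(5,6) by (simp_all add: generate.incl)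
qed

end

interpretation Z41_Z11: prime_grid 41 11
  by unfold_locales simp_all

lemma Pts_eq_grid: "Pts = Z41_Z11.grid"
  by (simp add: Pts_def Z41_Z11.grid_def)

lemma AGL_prod_eq_AGL: "AGL_prod = Z41_Z11.AGL"
  by (simp add: AGL_prod_def Z41_Z11.AGL_eq_residues Pts_eq_grid)

lemma alpha_eq_aff: "alpha = Z41_Z11.aff 1 1 1 0"
  using Z41_Z11.aff_of_nat[of 1 1 1 0] unfolding alpha_def Pts_eq_grid
  by (auto intro!: restrict_ext simp: Z41_Z11.grid_def)

lemma beta_eq_aff: "beta = Z41_Z11.aff 1 0 1 1"
  using Z41_Z11.aff_of_nat[of 1 0 1 1] unfolding beta_def Pts_eq_grid
  by (auto intro!: restrict_ext simp: Z41_Z11.grid_def)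

lemma gamma_eq_aff: "gamma a b i = Z41_Z11.aff (int a ^ 8) 0 (int b ^ (2 * i)) 0"
  using Z41_Z11.aff_of_nat[of "a ^ 8" 0 "b ^ (2 * i)" 0] unfolding gamma_def Pts_eq_grid
  by simp

lemma iota_eq_aff: "iota = Z41_Z11.aff (- 1) 0 1 0"
  unfolding iota_def Z41_Z11.aff_def Pts_eq_grid
  by (intro restrict_ext) (auto simp: Z41_Z11.grid_def zmod_zminus1_eq_if nat_diff_distrib)

theorem lemma5p1:
  fixes a b i :: nat and G :: "(nat \<times> nat \<Rightarrow> nat \<times> nat) set"
  assumes "residue_primroot 41 a" and "residue_primroot 11 b"
    and "i \<in> {1, 2, 3, 4}"
    and "G = generate (BijGroup Pts) {alpha, beta, iota, gamma a b i}
         \<or> G = generate (BijGroup Pts) {alpha, beta, gamma a b i}"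
  shows "normalizer (BijGroup Pts) G = AGL_prod"
proof -
  have "coprime a 41" "coprime b 11"
    using assms(1,2) by (simp_all add: residue_primroot_def coprime_commute)
  then have "coprime (int a) (int 41)" "coprime (int b) (int 11)"
    by (simp_all only: coprime_int_iff)
  then have generators: "{alpha, beta, iota, gamma a b i} \<subseteq> Z41_Z11.AGL"
    by (simp add: alpha_eq_aff beta_eq_aff iota_eq_aff gamma_eq_aff Z41_Z11.aff_in_AGL)
  from assms(4) obtain S where G: "G = generate (BijGroup Pts) S"
    and S: "S \<subseteq> {alpha, beta, iota, gamma a b i}" "alpha \<in> S" "beta \<in> S"
    by blast
  with generators have "S \<subseteq> Z41_Z11.AGL"
    by blast
  then show ?thesis
    using Z41_Z11.normalizer_generate_eq_AGL[of S] G S(2,3)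
    by (simp add: Pts_eq_grid AGL_prod_eq_AGL alpha_eq_aff beta_eq_aff)
qed

end
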